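(* Let $t$ be a term of the distributive $\lambda$-calculus. If $t$ is closed (has no free variables) and is a normal form for $\to_{\mathsf{dist}}$, then $t$ is a value, i.e. $t$ is a variable, an abstraction $\lambda x.s$, or a pair $\langle s,u\rangle$.
   Context: Terms of the distributive $\lambda$-calculus are given by the grammar $t,s,u ::= x \mid \lambda x.t \mid ts \mid \langle t,s\rangle \mid \pi_1 t \mid \pi_2 t$, considered up to $\alpha$-renaming; $t\{x:=s\}$ denotes capture-avoiding substitution. The top-level rules are: $(\lambda x.t)s \mapsto_\beta t\{x:=s\}$; $\pi_i\langle t_1,t_2\rangle \mapsto_{\pi_i} t_i$ for $i=1,2$; $\langle t,s\rangle u \mapsto_{@_\times} \langle tu, su\rangle$; $\pi_i(\lambda x.t)\mapsto_{\pi_\lambda} \lambda x.\pi_i t$ for $i=1,2$. The relation $\to_{\mathsf{dist}}$ is the closure of the union of these rules under all term constructors (i.e. a rule may be applied to any subterm). A normal form is a term with no $\to_{\mathsf{dist}}$-reduct. *)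

theory Defs
  imports Main
begin

text \<open>Terms of the distributive lambda-calculus, in de Bruijn notation
  (so alpha-equivalent terms are identified syntactically).\<close>
datatype trm = Var nat | Lam trm | App trm trm | Pair trm trm | Pi1 trm | Pi2 trm

fun lift :: "nat \<Rightarrow> trm \<Rightarrow> trm" where
  "lift k (Var i) = (if i < k then Var i else Var (Suc i))"
| "lift k (Lam t) = Lam (lift (Suc k) t)"
| "lift k (App t s) = App (lift k t) (lift k s)"
| "lift k (Pair t s) = Pair (lift k t) (lift k s)"
| "lift k (Pi1 t) = Pi1 (lift k t)"
| "lift k (Pi2 t) = Pi2 (lift k t)"

fun subst :: "trm \<Rightarrow> nat \<Rightarrow> trm \<Rightarrow> trm" where
  "subst (Var i) k s = (if k < i then Var (i - 1) else if i = k then s else Var i)"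
| "subst (Lam t) k s = Lam (subst t (Suc k) (lift 0 s))"
| "subst (App t u) k s = App (subst t k s) (subst u k s)"
| "subst (Pair t u) k s = Pair (subst t k s) (subst u k s)"
| "subst (Pi1 t) k s = Pi1 (subst t k s)"
| "subst (Pi2 t) k s = Pi2 (subst t k s)"

fun closed_at :: "nat \<Rightarrow> trm \<Rightarrow> bool" where
  "closed_at k (Var i) = (i < k)"
| "closed_at k (Lam t) = closed_at (Suc k) t"
| "closed_at k (App t s) = (closed_at k t \<and> closed_at k s)"
| "closed_at k (Pair t s) = (closed_at k t \<and> closed_at k s)"
| "closed_at k (Pi1 t) = closed_at k t"
| "closed_at k (Pi2 t) = closed_at k t"

definition closed :: "trm \<Rightarrow> bool" where
  "closed t \<longleftrightarrow> closed_at 0 t"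

inductive dist_step :: "trm \<Rightarrow> trm \<Rightarrow> bool" where
  beta: "dist_step (App (Lam t) s) (subst t 0 s)"
| pi1: "dist_step (Pi1 (Pair t s)) t"
| pi2: "dist_step (Pi2 (Pair t s)) s"
| app_pair: "dist_step (App (Pair t s) u) (Pair (App t u) (App s u))"
| pi1_lam: "dist_step (Pi1 (Lam t)) (Lam (Pi1 t))"
| pi2_lam: "dist_step (Pi2 (Lam t)) (Lam (Pi2 t))"
| lam: "dist_step t t' \<Longrightarrow> dist_step (Lam t) (Lam t')"
| appL: "dist_step t t' \<Longrightarrow> dist_step (App t s) (App t' s)"
| appR: "dist_step s s' \<Longrightarrow> dist_step (App t s) (App t s')"
| pairL: "dist_step t t' \<Longrightarrow> dist_step (Pair t s) (Pair t' s)"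
| pairR: "dist_step s s' \<Longrightarrow> dist_step (Pair t s) (Pair t s')"
| proj1: "dist_step t t' \<Longrightarrow> dist_step (Pi1 t) (Pi1 t')"
| proj2: "dist_step t t' \<Longrightarrow> dist_step (Pi2 t) (Pi2 t')"

definition normal_form :: "trm \<Rightarrow> bool" where
  "normal_form t \<longleftrightarrow> (\<nexists>t'. dist_step t t')"

definition is_value :: "trm \<Rightarrow> bool" where
  "is_value t \<longleftrightarrow> (\<exists>i. t = Var i) \<or> (\<exists>s. t = Lam s) \<or> (\<exists>s u. t = Pair s u)"

end

theory Submission
  imports Defs
begin

text \<open>A normal form that is not a value is stuck on a free variable in head position, i.e. it is
  neutral: a variable applied to arguments and projected. A closed term has no free head variable.\<close>

inductive neutral :: "trm \<Rightarrow> bool" where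
  Var: "neutral (Var i)"
| App: "neutral t \<Longrightarrow> neutral (App t s)"
| Pi1: "neutral t \<Longrightarrow> neutral (Pi1 t)"
| Pi2: "neutral t \<Longrightarrow> neutral (Pi2 t)"

lemma neutral_not_closed_at: "neutral t \<Longrightarrow> \<not> closed_at 0 t"
  by (induction rule: neutral.induct) auto

lemma normal_form_AppD: "normal_form (App t s) \<Longrightarrow> normal_form t"
  unfolding normal_form_def by (meson dist_step.appL)

lemma normal_form_Pi1D: "normal_form (Pi1 t) \<Longrightarrow> normal_form t"
  unfolding normal_form_def by (meson dist_step.proj1)

lemma normal_form_Pi2D: "normal_form (Pi2 t) \<Longrightarrow> normal_form t"
  unfolding normal_form_def by (meson dist_step.proj2)

lemma normal_form_value_or_neutral: "normal_form t \<Longrightarrow> is_value t \<or> neutral t"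
proof (induction t)
  case (App t s)
  then have "is_value t \<or> neutral t" by (blast dest: normal_form_AppD)
  then show ?case
    using App.prems unfolding is_value_def normal_form_def
    by (auto intro: dist_step.intros neutral.intros)
next
  case (Pi1 t)
  then have "is_value t \<or> neutral t" by (blast dest: normal_form_Pi1D)
  then show ?case
    using Pi1.prems unfolding is_value_def normal_form_def
    by (auto intro: dist_step.intros neutral.intros)
next
  case (Pi2 t)
  then have "is_value t \<or> neutral t" by (blast dest: normal_form_Pi2D)
  then show ?case
    using Pi2.prems unfolding is_value_def normal_form_def
    by (auto intro: dist_step.intros neutral.intros)
qed (auto simp: is_value_def)

theorem proposition1:
  fixes t :: trm
  assumes "closed t" and "normal_form t"
  shows "is_value t"
  using normal_form_value_or_neutral[OF \<open>normal_form t\<close>] neutral_not_closed_at \<open>closed t\<close>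
  unfolding closed_def by blast

end
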